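(* Let $A$ be an evolution algebra over a commutative ring $R$ with finite basis $x_1,\dots,x_N$ and structure coefficient matrix $C=(c_{ki})_{N\times N}$. For $\alpha=(a_1,\dots,a_N)\in R^N$ let $C_\alpha=(a_jc_{kj})_{k,j}$ (the $j$-th column of $C$ multiplied by $a_j$). Then $A$ is nil if and only if for every $\alpha\in R^N$ there exists a positive integer $k_\alpha$ such that $C_\alpha^{k_\alpha}\alpha^T=0$.
   Context: An evolution algebra over a commutative ring $R$ is a free $R$-module $A$ with basis $\{x_i\}$ equipped with the $R$-bilinear multiplication determined by $x_ix_j=0$ for $i\ne j$ and $x_i^2=\sum_k c_{ki}x_k$ with $c_{ki}\in R$. The structure coefficient matrix $C$ has $(k,i)$ entry $c_{ki}$. Principal powers: $a^1=a$, $a^n=a^{n-1}a$. $A$ is nil if for every $a\in A$ there is $n\in\mathbb{N}$ with $a^n=0$. *)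

theory Defs
  imports "Jordan_Normal_Form.Matrix"
begin

text \<open>An evolution algebra over a commutative ring R with basis x_1..x_N and
structure matrix C (entry (k,i) = c_ki, x_i^2 = sum_k c_ki x_k).  Elements are
coordinate vectors of dimension N w.r.t. the basis.  Bilinearity and
x_i x_j = 0 for i <> j give (a b)_k = sum_i c_ki a_i b_i.\<close>

definition evo_mult :: "'a::comm_ring_1 mat \<Rightarrow> 'a vec \<Rightarrow> 'a vec \<Rightarrow> 'a vec" where
  "evo_mult C a b = vec (dim_row C) (\<lambda>k. \<Sum>i<dim_col C. C $$ (k, i) * (a $ i * b $ i))"

text \<open>Principal powers: a^1 = a, a^(n+1) = a^n a.  (a^0 is not used.)\<close>
fun evo_ppow :: "'a::comm_ring_1 mat \<Rightarrow> 'a vec \<Rightarrow> nat \<Rightarrow> 'a vec" where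
  "evo_ppow C a 0 = a"
| "evo_ppow C a (Suc 0) = a"
| "evo_ppow C a (Suc (Suc n)) = evo_mult C (evo_ppow C a (Suc n)) a"

definition evo_nil :: "nat \<Rightarrow> 'a::comm_ring_1 mat \<Rightarrow> bool" where
  "evo_nil N C \<longleftrightarrow> (\<forall>a \<in> carrier_vec N. \<exists>n\<ge>1. evo_ppow C a n = 0\<^sub>v N)"

definition C_alpha :: "'a::comm_ring_1 mat \<Rightarrow> 'a vec \<Rightarrow> 'a mat" where
  "C_alpha C \<alpha> = mat (dim_row C) (dim_col C) (\<lambda>(k, j). \<alpha> $ j * C $$ (k, j))"

end

theory Submission
  imports Defs
begin

(* Writing elements of A as coordinate vectors, right multiplication by a
   fixed element alpha is the linear map with matrix C_alpha: the k-th
   coordinate of b alpha is the sum over j of c_kj alpha_j b_j.  Hence the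
   principal powers of alpha are alpha^(n+1) = C_alpha^n alpha.  The theorem
   follows by comparing exponents: a vanishing principal power alpha^n with
   n >= 2 is C_alpha^(n-1) alpha = 0, and alpha^1 = alpha = 0 makes every
   C_alpha^k alpha vanish. *)

text \<open>The library defines matrix powers by multiplication on the right;
  for square matrices the factor can also be split off on the left.\<close>

lemma pow_mat_Suc_left:
  fixes A :: "'a::semiring_1 mat"
  assumes A: "A \<in> carrier_mat n n"
  shows "A ^\<^sub>m Suc k = A * A ^\<^sub>m k"
proof (induction k)
  case 0
  then show ?case using A by simp
next
  case (Suc k)
  have "A ^\<^sub>m Suc (Suc k) = (A * A ^\<^sub>m k) * A"
    using Suc by simp
  also have "\<dots> = A * (A ^\<^sub>m k * A)"
    using A by (simp add: assoc_mult_mat[of _ n n _ n _ n])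
  finally show ?case by simp
qed

lemma pow_mat_Suc_mult_vec:
  fixes A :: "'a::semiring_1 mat"
  assumes A: "A \<in> carrier_mat n n" and v: "v \<in> carrier_vec n"
  shows "A ^\<^sub>m Suc k *\<^sub>v v = A *\<^sub>v (A ^\<^sub>m k *\<^sub>v v)"
  unfolding pow_mat_Suc_left[OF A] using A v by (simp add: assoc_mult_mat_vec[of _ n n _ n])

lemma C_alpha_carrier:
  assumes "C \<in> carrier_mat N N"
  shows "C_alpha C \<alpha> \<in> carrier_mat N N"
  using assms unfolding C_alpha_def by auto

lemma evo_mult_right_C_alpha:
  assumes "C \<in> carrier_mat N N" "\<alpha> \<in> carrier_vec N" "b \<in> carrier_vec N"
  shows "evo_mult C b \<alpha> = C_alpha C \<alpha> *\<^sub>v b"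
  using assms unfolding evo_mult_def C_alpha_def
  by (auto simp: mult_mat_vec_def scalar_prod_def lessThan_atLeast0 ac_simps
           intro!: eq_vecI sum.cong)

lemma evo_ppow_C_alpha:
  assumes C: "C \<in> carrier_mat N N" and \<alpha>: "\<alpha> \<in> carrier_vec N"
  shows "evo_ppow C \<alpha> (Suc n) = C_alpha C \<alpha> ^\<^sub>m n *\<^sub>v \<alpha>"
proof (induction n)
  case 0
  have "dim_row (C_alpha C \<alpha>) = N" using C_alpha_carrier[OF C] by auto
  then show ?case using \<alpha> by simp
next
  case (Suc n)
  have CA: "C_alpha C \<alpha> \<in> carrier_mat N N" by (rule C_alpha_carrier[OF C])
  have pow_carrier: "C_alpha C \<alpha> ^\<^sub>m n *\<^sub>v \<alpha> \<in> carrier_vec N"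
    using CA \<alpha> by (meson mult_mat_vec_carrier pow_carrier_mat)
  have "evo_ppow C \<alpha> (Suc (Suc n)) = evo_mult C (C_alpha C \<alpha> ^\<^sub>m n *\<^sub>v \<alpha>) \<alpha>"
    using Suc by simp
  also have "\<dots> = C_alpha C \<alpha> *\<^sub>v (C_alpha C \<alpha> ^\<^sub>m n *\<^sub>v \<alpha>)"
    by (rule evo_mult_right_C_alpha[OF C \<alpha> pow_carrier])
  also have "\<dots> = C_alpha C \<alpha> ^\<^sub>m Suc n *\<^sub>v \<alpha>"
    by (rule pow_mat_Suc_mult_vec[OF CA \<alpha>, symmetric])
  finally show ?case .
qed

lemma evo_ppow_vanishes_iff:
  assumes C: "C \<in> carrier_mat N N" and \<alpha>: "\<alpha> \<in> carrier_vec N"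
  shows "(\<exists>n\<ge>1. evo_ppow C \<alpha> n = 0\<^sub>v N) \<longleftrightarrow>
         (\<exists>k\<ge>1. C_alpha C \<alpha> ^\<^sub>m k *\<^sub>v \<alpha> = 0\<^sub>v N)"
proof
  assume "\<exists>n\<ge>1. evo_ppow C \<alpha> n = 0\<^sub>v N"
  then obtain m where zero: "evo_ppow C \<alpha> (Suc m) = 0\<^sub>v N"
    by (metis Suc_pred' less_eq_Suc_le One_nat_def)
  show "\<exists>k\<ge>1. C_alpha C \<alpha> ^\<^sub>m k *\<^sub>v \<alpha> = 0\<^sub>v N"
  proof (cases m)
    case 0
    text \<open>\<open>\<alpha>\<^sup>1 = \<alpha> = 0\<close>, and every power of \<open>C_alpha\<close> kills the zero vector.\<close>
    then have "\<alpha> = 0\<^sub>v N" using zero by simp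
    then show ?thesis using C_alpha_carrier[OF C, of \<alpha>] by (intro exI[of _ 1]) auto
  next
    case (Suc j)
    then show ?thesis using zero evo_ppow_C_alpha[OF C \<alpha>, of m] by auto
  qed
next
  assume "\<exists>k\<ge>1. C_alpha C \<alpha> ^\<^sub>m k *\<^sub>v \<alpha> = 0\<^sub>v N"
  then obtain k where "C_alpha C \<alpha> ^\<^sub>m k *\<^sub>v \<alpha> = 0\<^sub>v N" by blast
  then show "\<exists>n\<ge>1. evo_ppow C \<alpha> n = 0\<^sub>v N"
    using evo_ppow_C_alpha[OF C \<alpha>, of k] by (intro exI[of _ "Suc k"]) auto
qed

theorem theorem2p5:
  fixes C :: "'a::comm_ring_1 mat" and N :: nat
  assumes "C \<in> carrier_mat N N"
  shows "evo_nil N C \<longleftrightarrow>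
    (\<forall>\<alpha> \<in> carrier_vec N. \<exists>k\<ge>1. (C_alpha C \<alpha> ^\<^sub>m k) *\<^sub>v \<alpha> = 0\<^sub>v N)"
  unfolding evo_nil_def using evo_ppow_vanishes_iff[OF assms] by blast

end
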